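(* Let $\sigma$ be a sequence of transitions such that $G_\sigma$ has no negative cycle, let $H=|G_\sigma|$, and let $k\ge 1$. If there is a complete p-tree with root labelled $(x,y)$, weight $w$ and height at most $k$, then in the $2k$-fold composition $H^{\odot 2k}=H\odot\cdots\odot H$ (whose columns are $0,\dots,4k-1$, the $l$-th copy of $H$ occupying columns $2l-2$ and $2l-1$) there is a path from $(2k-1,x)$ to $(2k-1,y)$ of weight at most $w$; hence the minimal weight of such a path is at most $w$.
   Context: Fix a finite set of clocks $X=\{x_0,\dots,x_m\}$ and a finite sequence $\sigma$ of timed-automaton transitions over $X$. A weight is a pair $(\preccurlyeq,d)$ with $\preccurlyeq\in\{<,\le\}$, $d\in\mathbb{Z}$; weights are added by $(\preccurlyeq_1,d_1)+(\preccurlyeq_2,d_2)=(\preccurlyeq,d_1+d_2)$, $\preccurlyeq$ being $<$ iff one of $\preccurlyeq_1,\preccurlyeq_2$ is $<$, and totally ordered by $(\preccurlyeq,d)<(\preccurlyeq',d')$ iff $d<d'$, or $d=d'$, $\preccurlyeq$ is $<$ and $\preccurlyeq'$ is $\le$. A weight is negative if it is smaller than $(\le,0)$; the weight of a path is the sum of its edge weights. A transformation graph with $k+1$ columns is a directed graph with vertex set $\{0,\dots,k\}\times X$ with weighted edges. $G_\sigma$ is the transformation graph of $\sigma$ (the composition of the one-transition graphs encoding time elapse, guard and reset of each transition). Composition: if $G_1$ has $k_1$ columns and $G_2$ has $k_2$ columns, $G_1\odot G_2$ has vertex set $\{0,\dots,k_1+k_2-1\}\times X$, the edges of $G_1$,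 the edges of $G_2$ shifted by $k_1$ columns, and for every $x\in X$ edges $(k_1-1,x)\to(k_1,x)$ and $(k_1,x)\to(k_1-1,x)$ of weight $(\le,0)$. The canonical form of a graph $G$ without negative cycles has, for every pair of distinct vertices $u,w$ connected by a path, an edge $u\to w$ weighted by the minimal path weight. $|G|$ is the canonical form of $G$ restricted to its first and last columns, renumbered $0$ and $1$. p-trees (relative to $H=|G_\sigma|$): a p-tree is a finite rooted tree with weighted edges whose nodes are labelled by $\top$ or by pairs $(x,y)\in X\times X$; nodes labelled $\top$ are leaves. A node labelled $(x,y)$ has children of exactly one of the following forms: (a) a single child $\top$, with edge weight $e$, where $H$ has an edge $(c,x)\to(c,y)$ of weight $e$ for some $c\in\{0,1\}$; (b) a single child $(u,v)$, with edge weight $e_1+e_2$, where for some $c,c'\in\{0,1\}$ with $c\ne c'$, $H$ has edges $(c,x)\to(c',u)$ of weight $e_1$ and $(c',v)\to(c,y)$ of weight $e_2$; (c) two children $(x,z)$ and $(z,y)$ for some $z\in X$, both with edge weight $(\le,0)$. The weight of a p-tree is the sum of all its edge weights. A p-tree is complete if all its leaves are labelled $\top$. The height of a tree is the maximal number of edges on a path from the root to a leaf. *)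

theory Defs
  imports Main
begin

text \<open>A weight is a pair (comparison, integer); Strict stands for the symbol <, NonStrict for the symbol \<le>.\<close>
datatype cmp = Strict | NonStrict

type_synonym weight = "cmp \<times> int"

definition wzero :: weight where "wzero = (NonStrict, 0)"

definition wadd :: "weight \<Rightarrow> weight \<Rightarrow> weight" where
  "wadd a b = ((if fst a = Strict \<or> fst b = Strict then Strict else NonStrict), snd a + snd b)"

definition wless :: "weight \<Rightarrow> weight \<Rightarrow> bool" where
  "wless a b \<longleftrightarrow> snd a < snd b \<or> (snd a = snd b \<and> fst a = Strict \<and> fst b = NonStrict)"

definition wle :: "weight \<Rightarrow> weight \<Rightarrow> bool" where
  "wle a b \<longleftrightarrow> wless a b \<or> a = b"

definition negative :: "weight \<Rightarrow> bool" where
  "negative a \<longleftrightarrow> wless a wzero"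

fun wsum :: "weight list \<Rightarrow> weight" where
  "wsum [] = wzero"
| "wsum (a # as) = wadd a (wsum as)"

text \<open>Vertices are (column, clock); edges are triples (source, weight, target).
  The clock set X is a finite type 'x.\<close>
type_synonym 'x vertex = "nat \<times> 'x"
type_synonym 'x edge = "'x vertex \<times> weight \<times> 'x vertex"

record 'x tgraph =
  ncols :: nat
  edges :: "'x edge set"

definition transformation_graph :: "'x tgraph \<Rightarrow> bool" where
  "transformation_graph G \<longleftrightarrow> finite (edges G) \<and>
     (\<forall>(u, e, v) \<in> edges G. fst u < ncols G \<and> fst v < ncols G)"

inductive walk :: "'x edge set \<Rightarrow> 'x vertex \<Rightarrow> 'x edge list \<Rightarrow> 'x vertex \<Rightarrow> bool"
  for E where
  walk_Nil: "walk E u [] u"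
| walk_Cons: "(u, e, v) \<in> E \<Longrightarrow> walk E v es t \<Longrightarrow> walk E u ((u, e, v) # es) t"

definition path_weight :: "'x edge list \<Rightarrow> weight" where
  "path_weight es = wsum (map (\<lambda>(u, e, v). e) es)"

definition no_neg_cycle :: "'x edge set \<Rightarrow> bool" where
  "no_neg_cycle E \<longleftrightarrow> (\<forall>u es. walk E u es u \<and> es \<noteq> [] \<longrightarrow> \<not> negative (path_weight es))"

definition canonical_edges :: "'x edge set \<Rightarrow> 'x edge set" where
  "canonical_edges E = {(u, m, v). u \<noteq> v \<and>
      (\<exists>es. walk E u es v \<and> path_weight es = m) \<and>
      (\<forall>es. walk E u es v \<longrightarrow> wle m (path_weight es))}"

text \<open>|G|: canonical form restricted to first and last column, renumbered 0 and 1.\<close>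
definition renum :: "'x tgraph \<Rightarrow> nat \<Rightarrow> nat" where
  "renum G c = (if c = 0 then 0 else ncols G - 1)"

definition restrict_graph :: "'x tgraph \<Rightarrow> 'x tgraph" where
  "restrict_graph G = \<lparr> ncols = 2,
     edges = {((c, a), m, (c', b)) | c a m c' b. c \<le> 1 \<and> c' \<le> 1 \<and>
                ((renum G c, a), m, (renum G c', b)) \<in> canonical_edges (edges G)} \<rparr>"

definition shift_edges :: "nat \<Rightarrow> 'x edge set \<Rightarrow> 'x edge set" where
  "shift_edges n E = {((fst u + n, snd u), e, (fst v + n, snd v)) | u e v. (u, e, v) \<in> E}"

definition compose :: "'x tgraph \<Rightarrow> 'x tgraph \<Rightarrow> 'x tgraph" where
  "compose G1 G2 = \<lparr> ncols = ncols G1 + ncols G2,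
     edges = edges G1 \<union> shift_edges (ncols G1) (edges G2)
       \<union> {((ncols G1 - 1, x), wzero, (ncols G1, x)) | x. True}
       \<union> {((ncols G1, x), wzero, (ncols G1 - 1, x)) | x. True} \<rparr>"

text \<open>n-fold composition H \<odot> ... \<odot> H (n \<ge> 1).\<close>
fun gpow :: "'x tgraph \<Rightarrow> nat \<Rightarrow> 'x tgraph" where
  "gpow H 0 = H"
| "gpow H (Suc 0) = H"
| "gpow H (Suc (Suc n)) = compose (gpow H (Suc n)) H"

text \<open>A node is PTop (label \<top>) or PNode (x,y) cs with a list of weighted children;
  PNode (x,y) [] is a leaf labelled (x,y).\<close>
datatype 'x ptree = PTop | PNode "'x \<times> 'x" "(weight \<times> 'x ptree) list"

fun root_label :: "'x ptree \<Rightarrow> ('x \<times> 'x) option" where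
  "root_label PTop = None"
| "root_label (PNode l cs) = Some l"

definition children_ok :: "'x tgraph \<Rightarrow> 'x \<Rightarrow> 'x \<Rightarrow> (weight \<times> 'x ptree) list \<Rightarrow> bool" where
  "children_ok H x y cs \<longleftrightarrow> cs = [] \<or>
     (\<exists>e c. c \<le> 1 \<and> ((c, x), e, (c, y)) \<in> edges H \<and> cs = [(e, PTop)]) \<or>
     (\<exists>c c' u v e1 e2 cs'. c \<le> 1 \<and> c' \<le> 1 \<and> c \<noteq> c' \<and>
        ((c, x), e1, (c', u)) \<in> edges H \<and> ((c', v), e2, (c, y)) \<in> edges H \<and>
        cs = [(wadd e1 e2, PNode (u, v) cs')]) \<or>
     (\<exists>z cs1 cs2. cs = [(wzero, PNode (x, z) cs1), (wzero, PNode (z, y) cs2)])"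

fun ptree_ok :: "'x tgraph \<Rightarrow> 'x ptree \<Rightarrow> bool" where
  "ptree_ok H PTop = True"
| "ptree_ok H (PNode (x, y) cs) = (children_ok H x y cs \<and> (\<forall>c \<in> set cs. ptree_ok H (snd c)))"

fun complete :: "'x ptree \<Rightarrow> bool" where
  "complete PTop = True"
| "complete (PNode l cs) = (cs \<noteq> [] \<and> (\<forall>c \<in> set cs. complete (snd c)))"

fun ptree_weight :: "'x ptree \<Rightarrow> weight" where
  "ptree_weight PTop = wzero"
| "ptree_weight (PNode l cs) = wsum (map (\<lambda>(e, t). wadd e (ptree_weight t)) cs)"

fun height :: "'x ptree \<Rightarrow> nat" where
  "height PTop = 0"
| "height (PNode l cs) = foldr max (map (\<lambda>(e, t). Suc (height t)) cs) 0"

end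

theory Submission
  imports Defs
begin

text \<open>
  Let H = |G_sigma|; it has exactly two columns.  In the 2k-fold composition
  H^(2k) the i-th copy of H (counting from 0) occupies columns 2i and 2i+1, and
  columns 2i+1 and 2i+2 are joined by zero-weight edges in both directions.  We read a complete
  p-tree as a recipe for a walk that stays at a junction column 2j+1: a leaf edge of H lying in
  column 1 or 0 is taken in copy j or j+1; a node whose child crosses from column c to column c'
  walks into the neighbouring copy, follows the child's walk at the next junction further out,
  and returns; a split concatenates two walks.  A tree of height h needs h copies on either
  side, so for height at most k the central junction 2k-1 of H^(2k) suffices.  The walk
  produced has weight exactly the weight of the tree.
\<close>

lemma wadd_assoc: "wadd (wadd a b) c = wadd a (wadd b c)"
  by (simp add: wadd_def)

lemma wadd_comm: "wadd a b = wadd b a"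
  by (auto simp: wadd_def)

lemma wadd_left_comm: "wadd a (wadd b c) = wadd b (wadd a c)"
  by (metis wadd_assoc wadd_comm)

lemmas wadd_ac = wadd_assoc wadd_comm wadd_left_comm

lemma wadd_wzero [simp]: "wadd a wzero = a" "wadd wzero a = a"
  by (cases a; cases "fst a"; auto simp: wadd_def wzero_def)+

text \<open>The bound of the theorem is attained exactly, so reflexivity of the order suffices.\<close>

lemma wle_refl: "wle a a"
  by (simp add: wle_def)

lemma path_weight_Nil [simp]: "path_weight [] = wzero"
  by (simp add: path_weight_def)

lemma path_weight_Cons [simp]: "path_weight ((u, e, v) # es) = wadd e (path_weight es)"
  by (simp add: path_weight_def)

lemma path_weight_append: "path_weight (xs @ ys) = wadd (path_weight xs) (path_weight ys)"
  by (induction xs) (auto simp: path_weight_def wadd_assoc)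

lemma walk_append: "walk E u xs v \<Longrightarrow> walk E v ys w \<Longrightarrow> walk E u (xs @ ys) w"
  by (induction rule: walk.induct) (auto intro: walk.intros)

text \<open>\<open>reaches E u w v\<close>: some walk from u to v in E has weight exactly w.  Walks of given
  weight compose, so this relation is the convenient currency of the embedding argument.\<close>

definition reaches :: "'x edge set \<Rightarrow> 'x vertex \<Rightarrow> weight \<Rightarrow> 'x vertex \<Rightarrow> bool" where
  "reaches E u w v \<longleftrightarrow> (\<exists>es. walk E u es v \<and> path_weight es = w)"

lemma reaches_edge: "(u, e, v) \<in> E \<Longrightarrow> reaches E u e v"
  unfolding reaches_def by (rule exI[of _ "[(u, e, v)]"]) (auto intro: walk.intros)

lemma reaches_trans:
  "reaches E u w1 v \<Longrightarrow> reaches E v w2 t \<Longrightarrow> reaches E u (wadd w1 w2) t"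
  unfolding reaches_def by (metis walk_append path_weight_append)

lemma gpow_ncols: "ncols (gpow H (Suc n)) = ncols H * Suc n"
  by (induction H "Suc n" arbitrary: n rule: gpow.induct) (auto simp: compose_def)

lemma gpow_link_edges:
  assumes "Suc i < n"
  shows "((ncols H * Suc i - 1, a), wzero, (ncols H * Suc i, a)) \<in> edges (gpow H n)
       \<and> ((ncols H * Suc i, a), wzero, (ncols H * Suc i - 1, a)) \<in> edges (gpow H n)"
  using assms
proof (induction H n rule: gpow.induct)
  case (3 H n)
  then consider "i = n" | "Suc i < Suc n" by linarith
  then show ?case
  proof cases
    case 1
    then show ?thesis by (simp add: compose_def gpow_ncols del: mult_Suc_right)
  next
    case 2
    then show ?thesis using "3.IH" by (simp add: compose_def)
  qed
qed auto

lemma gpow_copy_edge: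
  assumes "((c, a), e, (c', b)) \<in> edges H" and "i < n"
  shows "((c + ncols H * i, a), e, (c' + ncols H * i, b)) \<in> edges (gpow H n)"
  using assms
proof (induction H n rule: gpow.induct)
  case (3 H n)
  show ?case
  proof (cases "i = Suc n")
    case True
    have "((c + ncols (gpow H (Suc n)), a), e, (c' + ncols (gpow H (Suc n)), b))
          \<in> shift_edges (ncols (gpow H (Suc n))) (edges H)"
      unfolding shift_edges_def using "3.prems"(1) by force
    then show ?thesis
      using True by (simp add: compose_def gpow_ncols)
  next
    case False
    then show ?thesis using 3 by (simp add: compose_def)
  qed
qed auto

lemma reaches_junction:
  assumes "ncols H = 2" and "Suc j < n"
  shows "reaches (edges (gpow H n)) (2 * j + 1, a) w (2 * j + 1, b)
     \<longleftrightarrow> reaches (edges (gpow H n)) (2 * j + 2, a) w (2 * j + 2, b)"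
proof -
  let ?E = "edges (gpow H n)"
  have link: "reaches ?E (2 * j + 1, c) wzero (2 * j + 2, c)"
             "reaches ?E (2 * j + 2, c) wzero (2 * j + 1, c)" for c
    using gpow_link_edges[OF assms(2), of H c] assms(1) by (auto intro: reaches_edge)
  show ?thesis
    using reaches_trans[OF reaches_trans[OF link(1)] link(2)]
          reaches_trans[OF reaches_trans[OF link(2)] link(1)]
    by fastforce
qed

text \<open>The three ways a p-tree node over a two-column H is realised at the junction j of H^n.
  An edge of H inside column 1 is taken in copy j, one inside column 0 in copy j+1.\<close>

lemma reaches_column_edge:
  assumes "ncols H = 2" and "Suc j < n" and "c \<le> 1" and "((c, x), e, (c, y)) \<in> edges H"
  shows "reaches (edges (gpow H n)) (2 * j + 1, x) e (2 * j + 1, y)"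
proof (cases "c = 1")
  case True
  then show ?thesis
    using gpow_copy_edge[OF assms(4), of j n] assms(1,2) by (simp add: reaches_edge)
next
  case False
  then have "c = 0" using assms(3) by simp
  then have "reaches (edges (gpow H n)) (2 * j + 2, x) e (2 * j + 2, y)"
    using gpow_copy_edge[OF assms(4), of "Suc j" n] assms(1,2) by (simp add: reaches_edge)
  then show ?thesis using reaches_junction[OF assms(1,2)] by simp
qed

lemma reaches_detour_right:
  assumes "ncols H = 2" and "Suc j < n"
    and "((0, x), e1, (1, u)) \<in> edges H" and "((1, v), e2, (0, y)) \<in> edges H"
    and "reaches (edges (gpow H n)) (2 * Suc j + 1, u) w (2 * Suc j + 1, v)"
  shows "reaches (edges (gpow H n)) (2 * j + 1, x) (wadd e1 (wadd w e2)) (2 * j + 1, y)"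
proof -
  let ?E = "edges (gpow H n)"
  have "reaches ?E (2 * j + 2, x) e1 (2 * Suc j + 1, u)"
       "reaches ?E (2 * Suc j + 1, v) e2 (2 * j + 2, y)"
    using gpow_copy_edge[OF assms(3), of "Suc j" n] gpow_copy_edge[OF assms(4), of "Suc j" n]
      assms(1,2) by (auto intro: reaches_edge)
  then have "reaches ?E (2 * j + 2, x) (wadd e1 (wadd w e2)) (2 * j + 2, y)"
    using assms(5) by (blast intro: reaches_trans)
  then show ?thesis using reaches_junction[OF assms(1,2)] by simp
qed

lemma reaches_detour_left:
  assumes "ncols H = 2" and "Suc j < n"
    and "((1, x), e1, (0, u)) \<in> edges H" and "((0, v), e2, (1, y)) \<in> edges H"
    and "reaches (edges (gpow H n)) (2 * j + 1, u) w (2 * j + 1, v)"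
  shows "reaches (edges (gpow H n)) (2 * Suc j + 1, x) (wadd e1 (wadd w e2)) (2 * Suc j + 1, y)"
proof -
  let ?E = "edges (gpow H n)"
  have "reaches ?E (2 * j + 2, u) w (2 * j + 2, v)"
    using assms(5) reaches_junction[OF assms(1,2)] by simp
  moreover have "reaches ?E (2 * Suc j + 1, x) e1 (2 * j + 2, u)"
       "reaches ?E (2 * j + 2, v) e2 (2 * Suc j + 1, y)"
    using gpow_copy_edge[OF assms(3), of "Suc j" n] gpow_copy_edge[OF assms(4), of "Suc j" n]
      assms(1,2) by (auto intro: reaches_edge)
  ultimately show ?thesis by (blast intro: reaches_trans)
qed

lemma height_child: "(e, s) \<in> set cs \<Longrightarrow> height s < height (PNode l cs)"
proof (induction cs)
  case (Cons c cs)
  then show ?case by (cases c) (auto simp: less_max_iff_disj)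
qed simp

lemma height_pos: "complete (PNode l cs) \<Longrightarrow> 0 < height (PNode l cs)"
  by (cases cs) auto

text \<open>A complete p-tree over a two-column graph H with root (x,y) yields a
  walk from (2j+1,x) to (2j+1,y) in H^n of exactly the tree's weight, provided the tree fits
  into the copies on both sides of the junction j: at most j+1 copies to the left and at most
  n-j-1 to the right.  A leaf edge of column 1 is used in copy j, one of column 0 in copy j+1;
  a crossing child (u,v) is handled one copy further out on the side of its column; a split
  concatenates the two sub-walks.\<close>

lemma ptree_reaches:
  assumes "ncols H = 2" and "ptree_ok H t" and "complete t" and "root_label t = Some (x, y)"
    and "height t \<le> Suc j" and "Suc j + height t \<le> n"
  shows "reaches (edges (gpow H n)) (2 * j + 1, x) (ptree_weight t) (2 * j + 1, y)"
  using assms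
proof (induction H t arbitrary: x y j rule: ptree_ok.induct)
  case (1 H)
  then show ?case by simp
next
  case (2 H x' y' cs)
  let ?E = "edges (gpow H n)" and ?s = "PNode (x', y') cs"
  have H2: "ncols H = 2" and ok: "children_ok H x y cs" and cpl: "complete ?s"
    and low: "height ?s \<le> Suc j" and high: "Suc j + height ?s \<le> n"
    and [simp]: "x' = x" "y' = y"
    using "2.prems" by simp_all
  have child: "reaches ?E (2 * i + 1, a) (ptree_weight s) (2 * i + 1, b)"
    if "(e, s) \<in> set cs" "root_label s = Some (a, b)"
      "height s \<le> Suc i" "Suc i + height s \<le> n"
    for e s a b i
  proof -
    have "ptree_ok H s" "complete s" using "2.prems"(2,3) that(1) by auto
    then show ?thesis using "2.IH"[OF that(1), of a b i] H2 that(2-4) by simp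
  qed
  have "0 < height ?s" using cpl by (rule height_pos)
  from ok cpl consider
      (edge) e c where "c \<le> 1" "((c, x), e, (c, y)) \<in> edges H" "cs = [(e, PTop)]"
    | (detour) c c' u v e1 e2 ds where "c \<le> 1" "c' \<le> 1" "c \<noteq> c'"
        "((c, x), e1, (c', u)) \<in> edges H" "((c', v), e2, (c, y)) \<in> edges H"
        "cs = [(wadd e1 e2, PNode (u, v) ds)]"
    | (split) z ds1 ds2 where "cs = [(wzero, PNode (x, z) ds1), (wzero, PNode (z, y) ds2)]"
    unfolding children_ok_def by auto
  then show ?case
  proof cases
    case edge
    have "Suc j < n" using high \<open>0 < height ?s\<close> by simp
    then show ?thesis using reaches_column_edge[OF H2 _ edge(1,2)] edge(3) by simp
  next
    case detour
    let ?t = "PNode (u, v) ds"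
    have t_in: "(wadd e1 e2, ?t) \<in> set cs" using detour(6) by simp
    have "height ?t < height ?s" using t_in by (rule height_child)
    have "0 < height ?t" using cpl t_in by (intro height_pos) fastforce
    have weight: "ptree_weight ?s = wadd e1 (wadd (ptree_weight ?t) e2)"
      using detour(6) by (simp add: wadd_ac)
    consider "c = 0" "c' = 1" | "c = 1" "c' = 0" using detour(1-3) by linarith
    then show ?thesis
    proof cases
      case 1
      have "Suc j < n" using high \<open>0 < height ?s\<close> by simp
      moreover have "reaches ?E (2 * Suc j + 1, u) (ptree_weight ?t) (2 * Suc j + 1, v)"
        using low high \<open>height ?t < height ?s\<close>
        by (intro child[OF t_in root_label.simps(2)]) linarith+
      ultimately show ?thesis
        unfolding weight using reaches_detour_right[OF H2] detour(4,5) 1 by simp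
    next
      case 2
      obtain i where j: "j = Suc i"
        using low \<open>height ?t < height ?s\<close> \<open>0 < height ?t\<close> by (cases j) auto
      have "Suc i < n" using high j by simp
      moreover have "reaches ?E (2 * i + 1, u) (ptree_weight ?t) (2 * i + 1, v)"
        using low high \<open>height ?t < height ?s\<close> j
        by (intro child[OF t_in root_label.simps(2)]) linarith+
      ultimately show ?thesis
        unfolding weight j using reaches_detour_left[OF H2] detour(4,5) 2 by simp
    qed
  next
    case split
    let ?t1 = "PNode (x, z) ds1" and ?t2 = "PNode (z, y) ds2"
    have in_cs: "(wzero, ?t1) \<in> set cs" "(wzero, ?t2) \<in> set cs" using split by simp_all
    have "reaches ?E (2 * j + 1, x) (ptree_weight ?t1) (2 * j + 1, z)"
      using low high height_child[OF in_cs(1), of "(x', y')"]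
      by (intro child[OF in_cs(1) root_label.simps(2)]) linarith+
    moreover have "reaches ?E (2 * j + 1, z) (ptree_weight ?t2) (2 * j + 1, y)"
      using low high height_child[OF in_cs(2), of "(x', y')"]
      by (intro child[OF in_cs(2) root_label.simps(2)]) linarith+
    ultimately show ?thesis using split by (simp add: reaches_trans)
  qed
qed

text \<open>The theorem: apply the embedding lemma at the central junction j = k-1 of H^(2k).\<close>

theorem mainTheorem14:
  fixes G :: "'x::finite tgraph" and t :: "'x ptree" and k :: nat and x y :: 'x and w :: weight
  assumes "transformation_graph G" and "2 \<le> ncols G"
    and "no_neg_cycle (edges G)"
    and "1 \<le> k"
    and "ptree_ok (restrict_graph G) t" and "complete t"
    and "root_label t = Some (x, y)" and "ptree_weight t = w" and "height t \<le> k"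
  shows "\<exists>es. walk (edges (gpow (restrict_graph G) (2 * k))) (2 * k - 1, x) es (2 * k - 1, y)
              \<and> wle (path_weight es) w"
proof -
  let ?H = "restrict_graph G"
  have two_cols: "ncols ?H = 2" by (simp add: restrict_graph_def)
  obtain j where k: "k = Suc j" using \<open>1 \<le> k\<close> by (cases k) auto
  have "reaches (edges (gpow ?H (2 * k))) (2 * j + 1, x) w (2 * j + 1, y)"
    using ptree_reaches[OF two_cols \<open>ptree_ok ?H t\<close> \<open>complete t\<close> \<open>root_label t = Some (x, y)\<close>,
        of j "2 * k"] \<open>height t \<le> k\<close> \<open>ptree_weight t = w\<close> k by simp
  moreover have "2 * k - 1 = 2 * j + 1" using k by simp
  ultimately show ?thesis unfolding reaches_def by (metis wle_refl)
qed

end
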